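(* Let $f_n:\{0,1\}^{m_n}\to\{0,1\}^n$ be a family of functions computable by $\mathbf{NC}^0$ circuits, and let $c$ be the maximum number of inputs affecting any single output. Let $W_1,\dots,W_{m_n}$ be independent $\{0,1\}$-valued random variables and $X'=f_n(W)$. Let $n\ge b_0\ge b_1\ge\cdots\ge b_{2c}\ge1$. Then for every $n$ there exist $0<i\le 2c$, $S\subseteq\{1,\dots,n\}$ and $T\subseteq\{1,\dots,m_n\}$ such that $|S|\ge\frac{n}{2cb_i}$, $|T|\le cn/b_{i-1}$, and the random variables $\{X'_j:j\in S\}$ are mutually independent conditioned on any fixed value of $\{W_j:j\in T\}$.
   Context: An $\mathbf{NC}^0$ circuit family is one in which each output bit depends on at most a constant number $c$ (independent of $n$) of input bits; an input "affects" an output if the output's value depends on it. *)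

theory Defs
  imports "HOL-Probability.Probability"
begin

text \<open>Inputs of length m are modelled as functions nat => bool that are False
outside {0..<m} (this is exactly the support of the product pmf below).\<close>

definition inputs :: "nat \<Rightarrow> (nat \<Rightarrow> bool) set" where
  "inputs m = {w. \<forall>i. m \<le> i \<longrightarrow> \<not> w i}"

definition affects :: "((nat \<Rightarrow> bool) \<Rightarrow> nat \<Rightarrow> bool) \<Rightarrow> nat \<Rightarrow> nat \<Rightarrow> nat \<Rightarrow> bool" where
  "affects f m i j \<longleftrightarrow> i < m \<and> (\<exists>w \<in> inputs m. f w j \<noteq> f (w(i := \<not> w i)) j)"

definition locality :: "((nat \<Rightarrow> bool) \<Rightarrow> nat \<Rightarrow> bool) \<Rightarrow> nat \<Rightarrow> nat \<Rightarrow> nat" where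
  "locality f m n = Max ((\<lambda>j. card {i. affects f m i j}) ` {0..<n})"

definition input_dist :: "nat \<Rightarrow> (nat \<Rightarrow> real) \<Rightarrow> (nat \<Rightarrow> bool) pmf" where
  "input_dist m p = Pi_pmf {0..<m} False (\<lambda>i. bernoulli_pmf (p i))"

end

theory Submission
  imports Defs
begin

text \<open>
  Let \<open>N j\<close> be the set of at most \<open>c\<close> inputs affecting output \<open>j\<close>, and let the fan-out
  of an input be the number of outputs it affects; the fan-outs sum to at most \<open>c n\<close>.
  The \<open>2 c\<close> bands \<open>b k \<le> fan-out < b (k - 1)\<close> are disjoint, so some band is met by
  at most \<open>n / 2\<close> of the sets \<open>N j\<close>. Fix the inputs \<open>T\<close> of fan-out at least
  \<open>b (k - 1)\<close>; by Markov there are at most \<open>c n / b (k - 1)\<close> of them. Every output \<open>j\<close>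
  avoiding the band then has only free inputs \<open>N j - T\<close> of fan-out below \<open>b k\<close>, so it
  shares a free input with at most \<open>c b k\<close> outputs, and a greedy choice yields
  \<open>n / (2 c b k)\<close> outputs with pairwise disjoint free inputs. Conditioning a product
  distribution on \<open>W\<^sub>T\<close> leaves a product distribution, in which functions of disjoint
  blocks of coordinates are independent.
\<close>

section \<open>Independence in conditioned product distributions\<close>

lemma indep_vars_measure_pmf_cong:
  assumes indep: "prob_space.indep_vars (measure_pmf P) (\<lambda>_. count_space UNIV) X I"
    and eq: "\<And>i w. i \<in> I \<Longrightarrow> w \<in> set_pmf P \<Longrightarrow> X i w = Y i w"
  shows "prob_space.indep_vars (measure_pmf P) (\<lambda>_. count_space UNIV) Y I"
proof (cases "I = {}")
  case True
  then show ?thesis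
    by (simp add: prob_space.indep_vars_def[OF measure_pmf.prob_space_axioms]
        prob_space.indep_sets_def[OF measure_pmf.prob_space_axioms])
next
  case False
  note distr_eq_PiM = prob_space.indep_vars_iff_distr_eq_PiM'[OF measure_pmf.prob_space_axioms False]
  have "distr (measure_pmf P) (\<Pi>\<^sub>M i\<in>I. count_space UNIV) (\<lambda>w. \<lambda>i\<in>I. Y i w)
      = distr (measure_pmf P) (\<Pi>\<^sub>M i\<in>I. count_space UNIV) (\<lambda>w. \<lambda>i\<in>I. X i w)"
    by (rule distr_cong_AE) (auto intro!: AE_pmfI simp: eq space_PiM)
  moreover have "distr (measure_pmf P) (count_space UNIV) (Y i)
      = distr (measure_pmf P) (count_space UNIV) (X i)" if "i \<in> I" for i
    by (rule distr_cong_AE) (auto intro!: AE_pmfI simp: eq that)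
  ultimately show ?thesis
    using indep by (simp add: distr_eq_PiM cong: PiM_cong)
qed

lemma cond_Pi_pmf_fix_coordinates:
  assumes fin: "finite I" and T: "T \<subseteq> I"
    and ne: "set_pmf (Pi_pmf I dflt B) \<inter> {w. \<forall>j\<in>T. w j = a j} \<noteq> {}"
  shows "cond_pmf (Pi_pmf I dflt B) {w. \<forall>j\<in>T. w j = a j}
       = Pi_pmf I dflt (\<lambda>i. if i \<in> T then return_pmf (a i) else B i)"
proof (rule pmf_eqI)
  fix w
  define E where "E = {w. \<forall>j\<in>T. w j = a j}"
  define B' where "B' = (\<lambda>i. if i \<in> T then return_pmf (a i) else B i)"
  have split_prod: "(\<Prod>i\<in>I. g i) = (\<Prod>i\<in>T. g i) * (\<Prod>i\<in>I-T. g i)" for g :: "_ \<Rightarrow> real"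
    using fin T by (metis prod.subset_diff mult.commute)
  have "E = Pi I (\<lambda>i. if i \<in> T then {a i} else UNIV)"
    using T by (auto simp: E_def Pi_def)
  then have "measure_pmf.prob (Pi_pmf I dflt B) E
      = (\<Prod>i\<in>I. measure_pmf.prob (B i) (if i \<in> T then {a i} else UNIV))"
    using fin by (simp add: measure_Pi_pmf_Pi)
  also have "\<dots> = (\<Prod>i\<in>T. pmf (B i) (a i))"
    by (subst split_prod) (auto simp: measure_pmf_single intro!: prod.neutral)
  finally have prob_E: "measure_pmf.prob (Pi_pmf I dflt B) E = (\<Prod>i\<in>T. pmf (B i) (a i))" .
  have prob_E_nonzero: "measure_pmf.prob (Pi_pmf I dflt B) E \<noteq> 0"
    using ne unfolding E_def by (rule measure_measure_pmf_not_zero)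
  show "pmf (cond_pmf (Pi_pmf I dflt B) E) w = pmf (Pi_pmf I dflt B') w"
  proof (cases "w \<in> E \<and> (\<forall>x. x \<notin> I \<longrightarrow> w x = dflt)")
    case True
    then have "(\<Prod>i\<in>I. pmf (B i) (w i))
        = (\<Prod>i\<in>T. pmf (B i) (a i)) * (\<Prod>i\<in>I. pmf (B' i) (w i))"
      by (simp add: split_prod B'_def E_def)
    then show ?thesis
      using True ne prob_E_nonzero
      by (simp add: pmf_cond E_def pmf_Pi[OF fin] prob_E[unfolded E_def])
  next
    case False
    have "pmf (Pi_pmf I dflt B') w = 0"
    proof (cases "w \<in> E")
      case True
      then show ?thesis
        using False fin by (auto simp: pmf_Pi)
    next
      case False
      then obtain j where "j \<in> T" "w j \<noteq> a j"
        by (auto simp: E_def)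
      then show ?thesis
        using T fin by (auto simp: pmf_Pi B'_def intro!: prod_zero bexI[of _ j])
    qed
    then show ?thesis
      using False ne fin by (auto simp: pmf_cond E_def pmf_Pi)
  qed
qed

lemma indep_vars_Pi_pmf_disjoint_blocks:
  fixes B :: "'i \<Rightarrow> 'a :: countable pmf"
  assumes fin: "finite I" and K: "\<And>j. j \<in> S \<Longrightarrow> K j \<subseteq> I"
    and disj: "disjoint_family_on K S"
    and blocks: "\<And>j w. j \<in> S \<Longrightarrow> w \<in> set_pmf (Pi_pmf I dflt B)
      \<Longrightarrow> X j w = Y j (restrict w (K j))"
  shows "prob_space.indep_vars (measure_pmf (Pi_pmf I dflt B)) (\<lambda>_. count_space UNIV) X S"
proof (rule indep_vars_measure_pmf_cong)
  have "prob_space.indep_vars (Pi_pmf I dflt B) (\<lambda>j. \<Pi>\<^sub>M i\<in>K j. count_space UNIV)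
      (\<lambda>j w. restrict w (K j)) S"
    using prob_space.indep_vars_restrict[OF measure_pmf.prob_space_axioms indep_vars_Pi_pmf[OF fin]
        K disj]
    by simp
  then show "prob_space.indep_vars (Pi_pmf I dflt B) (\<lambda>_. count_space UNIV)
      (\<lambda>j w. Y j (restrict w (K j))) S"
  proof (rule prob_space.indep_vars_compose2[OF measure_pmf.prob_space_axioms])
    fix j assume "j \<in> S"
    then have "finite (K j)"
      using K fin by (meson finite_subset)
    then show "Y j \<in> (\<Pi>\<^sub>M i\<in>K j. count_space UNIV) \<rightarrow>\<^sub>M count_space UNIV"
      by (simp add: count_space_PiM_finite)
  qed
qed (simp add: blocks)

lemma indep_vars_cond_Pi_pmf_local:
  fixes F :: "(nat \<Rightarrow> bool) \<Rightarrow> 'j \<Rightarrow> 'b"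
  assumes T: "T \<subseteq> {0..<m}" and deps: "\<And>j. j \<in> S \<Longrightarrow> N j \<subseteq> {0..<m}"
    and disj: "disjoint_family_on (\<lambda>j. N j - T) S"
    and local: "\<And>j w w'. j \<in> S \<Longrightarrow> w \<in> inputs m \<Longrightarrow> w' \<in> inputs m
      \<Longrightarrow> (\<And>i. i \<in> N j \<Longrightarrow> w i = w' i) \<Longrightarrow> F w j = F w' j"
    and ne: "set_pmf (Pi_pmf {0..<m} False B) \<inter> {w. \<forall>i\<in>T. w i = a i} \<noteq> {}"
  shows "prob_space.indep_vars
    (measure_pmf (cond_pmf (Pi_pmf {0..<m} False B) {w. \<forall>i\<in>T. w i = a i}))
    (\<lambda>_. count_space UNIV) (\<lambda>j w. F w j) S"
proof -
  define B' where "B' = (\<lambda>i. if i \<in> T then return_pmf (a i) else B i)"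
  \<comment> \<open>On the support of the conditioned product, \<open>w\<close> agrees with \<open>a\<close> on \<open>T\<close>, so
    \<open>F w j\<close> is a function of the block \<open>N j - T\<close> of \<open>w\<close> alone.\<close>
  define fill where "fill j r i = (if i \<in> N j - T then r i else if i \<in> T then a i else False)"
    for j and r :: "nat \<Rightarrow> bool" and i
  have "prob_space.indep_vars (measure_pmf (Pi_pmf {0..<m} False B')) (\<lambda>_. count_space UNIV)
      (\<lambda>j w. F w j) S"
  proof (rule indep_vars_Pi_pmf_disjoint_blocks[where Y = "\<lambda>j r. F (fill j r) j"])
    fix j w
    assume j: "j \<in> S" and w: "w \<in> set_pmf (Pi_pmf {0..<m} False B')"
    then have w_support: "w \<in> PiE_dflt {0..<m} False (set_pmf \<circ> B')"
      by (simp add: set_Pi_pmf)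
    then have w_inputs: "w \<in> inputs m"
      by (auto simp: PiE_dflt_def inputs_def)
    have w_T: "w i = a i" if "i \<in> T" for i
    proof -
      have "w i \<in> set_pmf (B' i)"
        using w_support that T by (auto simp: PiE_dflt_def)
      then show ?thesis
        using that by (simp add: B'_def)
    qed
    have "fill j (restrict w (N j - T)) \<in> inputs m"
      using T deps[OF j] by (auto simp: fill_def inputs_def)
    then show "F w j = F (fill j (restrict w (N j - T))) j"
      using w_inputs w_T by (intro local j) (auto simp: fill_def)
  qed (use T deps disj in auto)
  then show ?thesis
    using cond_Pi_pmf_fix_coordinates[OF _ T ne] by (simp add: B'_def)
qed

section \<open>Bounded dependency\<close>

lemma eq_if_agree_on_affecting_inputs:
  assumes w: "w \<in> inputs m" and w': "w' \<in> inputs m"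
    and agree: "\<And>i. affects f m i j \<Longrightarrow> w i = w' i"
  shows "f w j = f w' j"
proof -
  define v where "v k = (\<lambda>i. if i < k then w' i else w i)" for k
  have "f (v k) j = f w j" for k
  proof (induction k)
    case 0
    then show ?case by (simp add: v_def)
  next
    case (Suc k)
    show ?case
    proof (cases "w k = w' k")
      case True
      then have "v (Suc k) = v k"
        by (auto simp: v_def fun_eq_iff less_Suc_eq)
      then show ?thesis using Suc.IH by simp
    next
      case False
      then have "k < m" "\<not> affects f m k j"
        using w w' agree by (auto simp: inputs_def not_less[symmetric])
      moreover have "v k \<in> inputs m"
        using w w' by (auto simp: v_def inputs_def)
      ultimately have "f ((v k)(k := \<not> v k k)) j = f (v k) j"
        unfolding affects_def by blast
      moreover have "(v k)(k := \<not> v k k) = v (Suc k)"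
        using False by (auto simp: v_def fun_eq_iff less_Suc_eq)
      ultimately show ?thesis
        using Suc.IH by simp
    qed
  qed
  moreover have "v m = w'"
    using w w' by (auto simp: v_def inputs_def fun_eq_iff)
  ultimately show ?thesis by metis
qed

lemma exists_independent_subset:
  fixes R :: "'a \<Rightarrow> 'a \<Rightarrow> bool" and D :: real
  assumes "finite G" and sym: "\<And>x y. R x y \<Longrightarrow> R y x" and refl: "\<And>x. R x x"
    and "\<And>x. x \<in> G \<Longrightarrow> real (card {y\<in>G. R x y}) \<le> D"
  shows "\<exists>S\<subseteq>G. (\<forall>x\<in>S. \<forall>y\<in>S. x \<noteq> y \<longrightarrow> \<not> R x y) \<and> real (card G) \<le> D * real (card S)"
  using assms(1,4)
proof (induction G rule: finite_psubset_induct)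
  case (psubset G)
  show ?case
  proof (cases "G = {}")
    case True
    then show ?thesis by auto
  next
    case False
    then obtain x where x: "x \<in> G" by auto
    define G' where "G' = G - {y\<in>G. R x y}"
    have "G' \<subset> G"
      using x refl by (auto simp: G'_def)
    moreover have "real (card {y\<in>G'. R z y}) \<le> D" if "z \<in> G'" for z
    proof -
      have "card {y\<in>G'. R z y} \<le> card {y\<in>G. R z y}"
        using psubset.hyps by (intro card_mono) (auto simp: G'_def)
      then show ?thesis
        using psubset.prems[of z] that by (auto simp: G'_def)
    qed
    ultimately have "\<exists>S\<subseteq>G'. (\<forall>x\<in>S. \<forall>y\<in>S. x \<noteq> y \<longrightarrow> \<not> R x y)
        \<and> real (card G') \<le> D * real (card S)"
      by (rule psubset.IH)
    then obtain S where S: "S \<subseteq> G'" "\<forall>x\<in>S. \<forall>y\<in>S. x \<noteq> y \<longrightarrow> \<not> R x y"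
      "real (card G') \<le> D * real (card S)"
      by blast
    have "finite S" "x \<notin> S"
      using S(1) \<open>G' \<subset> G\<close> psubset.hyps refl by (auto simp: G'_def intro: finite_subset)
    have "card G = card G' + card {y\<in>G. R x y}"
      using psubset.hyps card_Diff_subset[of "{y\<in>G. R x y}" G] card_mono[of G "{y\<in>G. R x y}"]
      by (simp add: G'_def)
    then have "real (card G) \<le> D * real (card (insert x S))"
      using S(3) psubset.prems[OF x] \<open>finite S\<close> \<open>x \<notin> S\<close> by (simp add: algebra_simps)
    moreover have "\<not> R x y" "\<not> R y x" if "y \<in> S" for y
      using S(1) that sym by (auto simp: G'_def)
    then have "\<forall>u\<in>insert x S. \<forall>v\<in>insert x S. u \<noteq> v \<longrightarrow> \<not> R u v"
      using S(2) by blast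
    moreover have "insert x S \<subseteq> G"
      using S(1) x by (auto simp: G'_def)
    ultimately show ?thesis
      by blast
  qed
qed

locale bounded_dependency =
  fixes m n c :: nat and N :: "nat \<Rightarrow> nat set"
  assumes deps_subset: "\<And>j. N j \<subseteq> {0..<m}"
    and card_deps_le: "\<And>j. j < n \<Longrightarrow> card (N j) \<le> c"
begin

lemma finite_deps [simp]: "finite (N j)"
  using deps_subset by (rule finite_subset) simp

definition fanout :: "nat \<Rightarrow> nat" where
  "fanout t = card {j\<in>{0..<n}. t \<in> N j}"

definition hit_by :: "nat set \<Rightarrow> nat set" where
  "hit_by A = {j\<in>{0..<n}. N j \<inter> A \<noteq> {}}"

definition fanout_band :: "(nat \<Rightarrow> real) \<Rightarrow> nat \<Rightarrow> nat set" where
  "fanout_band b k = {t\<in>{0..<m}. b k \<le> real (fanout t) \<and> real (fanout t) < b (k - 1)}"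

lemma sum_card_deps_le: "(\<Sum>j\<in>{0..<n}. card (N j)) \<le> c * n"
  using sum_mono[of "{0..<n}" "\<lambda>j. card (N j)" "\<lambda>_. c"] card_deps_le
  by (simp add: mult.commute)

lemma sum_fanout: "(\<Sum>t\<in>{0..<m}. fanout t) = (\<Sum>j\<in>{0..<n}. card (N j))"
proof -
  have "(\<Sum>t\<in>{0..<m}. fanout t) = (\<Sum>t\<in>{0..<m}. \<Sum>j\<in>{0..<n}. if t \<in> N j then 1 else 0)"
    by (simp add: fanout_def sum.If_cases Int_def conj_commute)
  also have "\<dots> = (\<Sum>j\<in>{0..<n}. \<Sum>t\<in>{0..<m}. if t \<in> N j then 1 else 0)"
    by (rule sum.swap)
  also have "\<dots> = (\<Sum>j\<in>{0..<n}. card (N j))"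
    using deps_subset by (simp add: sum.If_cases Int_absorb1 Int_def[symmetric])
  finally show ?thesis .
qed

lemma card_high_fanout_le:
  assumes "0 < \<beta>"
  shows "real (card {t\<in>{0..<m}. \<beta> \<le> real (fanout t)}) \<le> real c * real n / \<beta>"
proof -
  let ?H = "{t\<in>{0..<m}. \<beta> \<le> real (fanout t)}"
  have "real (card ?H) * \<beta> = (\<Sum>t\<in>?H. \<beta>)"
    by simp
  also have "\<dots> \<le> (\<Sum>t\<in>?H. real (fanout t))"
    by (intro sum_mono) auto
  also have "\<dots> \<le> (\<Sum>t\<in>{0..<m}. real (fanout t))"
    by (intro sum_mono2) auto
  also have "\<dots> \<le> real c * real n"
    using sum_fanout sum_card_deps_le by (metis of_nat_le_iff of_nat_mult of_nat_sum)
  finally show ?thesis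
    using assms by (simp add: pos_le_divide_eq)
qed

lemma sum_card_hit_by_le:
  assumes "finite K" and disj: "disjoint_family_on A K"
  shows "(\<Sum>k\<in>K. card (hit_by (A k))) \<le> c * n"
proof -
  have "card (hit_by B) \<le> (\<Sum>j\<in>{0..<n}. card (N j \<inter> B))" for B
  proof -
    have "card (hit_by B) = (\<Sum>j\<in>hit_by B. 1)"
      by simp
    also have "\<dots> \<le> (\<Sum>j\<in>hit_by B. card (N j \<inter> B))"
      by (intro sum_mono) (auto simp: hit_by_def Suc_le_eq card_gt_0_iff)
    also have "\<dots> \<le> (\<Sum>j\<in>{0..<n}. card (N j \<inter> B))"
      by (intro sum_mono2) (auto simp: hit_by_def)
    finally show ?thesis .
  qed
  then have "(\<Sum>k\<in>K. card (hit_by (A k))) \<le> (\<Sum>k\<in>K. \<Sum>j\<in>{0..<n}. card (N j \<inter> A k))"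
    by (intro sum_mono)
  also have "\<dots> = (\<Sum>j\<in>{0..<n}. \<Sum>k\<in>K. card (N j \<inter> A k))"
    by (rule sum.swap)
  also have "\<dots> = (\<Sum>j\<in>{0..<n}. card (\<Union>k\<in>K. N j \<inter> A k))"
    using assms by (intro sum.cong refl, subst card_UN_disjoint) (auto simp: disjoint_family_on_def)
  also have "\<dots> \<le> (\<Sum>j\<in>{0..<n}. card (N j))"
    by (intro sum_mono card_mono) auto
  finally show ?thesis
    using sum_card_deps_le by linarith
qed

lemma card_conflicts_le:
  assumes "1 \<le> c" and "1 \<le> \<beta>" and "j < n"
    and light: "\<And>t. t \<in> N j - T \<Longrightarrow> real (fanout t) \<le> \<beta>"
  shows "real (card {j'\<in>{0..<n}. j = j' \<or> (N j - T) \<inter> (N j' - T) \<noteq> {}}) \<le> real c * \<beta>"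
    (is "real (card ?C) \<le> _")
proof (cases "N j - T = {}")
  case True
  then have "?C \<subseteq> {j}"
    by auto
  then have "real (card ?C) \<le> 1 * 1"
    using card_mono[of "{j}"] by simp
  also have "\<dots> \<le> real c * \<beta>"
    using assms(1,2) by (intro mult_mono) auto
  finally show ?thesis .
next
  case False
  have "?C \<subseteq> (\<Union>t\<in>N j - T. {j'\<in>{0..<n}. t \<in> N j'})"
    using False \<open>j < n\<close> by auto
  then have "card ?C \<le> card (\<Union>t\<in>N j - T. {j'\<in>{0..<n}. t \<in> N j'})"
    by (intro card_mono) auto
  also have "\<dots> \<le> (\<Sum>t\<in>N j - T. fanout t)"
    unfolding fanout_def by (intro card_UN_le) simp
  finally have "real (card ?C) \<le> (\<Sum>t\<in>N j - T. real (fanout t))"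
    by (simp flip: of_nat_sum)
  also have "\<dots> \<le> (\<Sum>t\<in>N j - T. \<beta>)"
    using light by (intro sum_mono)
  also have "\<dots> \<le> real c * \<beta>"
    using card_mono[of "N j" "N j - T"] card_deps_le[OF \<open>j < n\<close>] assms(2)
    by (simp add: mult_right_mono)
  finally show ?thesis .
qed

lemma exists_rarely_hit_band:
  fixes b :: "nat \<Rightarrow> real"
  assumes "1 \<le> c" and b_anti: "\<And>k. k < 2 * c \<Longrightarrow> b (Suc k) \<le> b k"
  shows "\<exists>k\<in>{1..2 * c}. 2 * card (hit_by (fanout_band b k)) \<le> n"
proof (rule ccontr)
  let ?band = "fanout_band b"
  assume none_rare: "\<not> ?thesis"
  have often_hit: "n + 1 \<le> 2 * card (hit_by (?band k))" if "k \<in> {1..2 * c}" for k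
  proof -
    have "\<not> 2 * card (hit_by (?band k)) \<le> n"
      using none_rare that by blast
    then show ?thesis
      by simp
  qed
  have band_disj: "?band k \<inter> ?band k' = {}" if "k < k'" "k' \<le> 2 * c" for k k'
  proof -
    have "b (k' - 1) \<le> b k"
      using that b_anti by (intro lift_Suc_antimono_le_ivl[of "{..<2 * c}" b k "k' - 1"]) auto
    then show ?thesis
      by (auto simp: fanout_band_def)
  qed
  have "disjoint_family_on ?band {1..2 * c}"
    unfolding disjoint_family_on_def
  proof (intro ballI impI)
    fix k k'
    assume "k \<in> {1..2 * c}" "k' \<in> {1..2 * c}" "k \<noteq> k'"
    then show "?band k \<inter> ?band k' = {}"
      using band_disj[of k k'] band_disj[of k' k] by (cases "k < k'") (auto simp: Int_commute)
  qed
  then have "(\<Sum>k\<in>{1..2 * c}. card (hit_by (?band k))) \<le> c * n"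
    by (intro sum_card_hit_by_le) simp
  moreover have "(\<Sum>k\<in>{1..2 * c}. n + 1) \<le> (\<Sum>k\<in>{1..2 * c}. 2 * card (hit_by (?band k)))"
    using often_hit by (intro sum_mono)
  moreover have "(\<Sum>k\<in>{1..2 * c}. 2 * card (hit_by (?band k)))
      = 2 * (\<Sum>k\<in>{1..2 * c}. card (hit_by (?band k)))"
    by (rule sum_distrib_left[symmetric])
  ultimately show False
    using \<open>1 \<le> c\<close> by simp
qed

lemma exists_scale_with_disjoint_free_deps:
  fixes b :: "nat \<Rightarrow> real"
  assumes c: "1 \<le> c" and b_anti: "\<And>k. k < 2 * c \<Longrightarrow> b (Suc k) \<le> b k"
    and b_last: "1 \<le> b (2 * c)"
  shows "\<exists>k S T. 0 < k \<and> k \<le> 2 * c \<and> S \<subseteq> {0..<n} \<and> T \<subseteq> {0..<m}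
    \<and> real n / (2 * real c * b k) \<le> real (card S)
    \<and> real (card T) \<le> real c * real n / b (k - 1)
    \<and> disjoint_family_on (\<lambda>j. N j - T) S"
proof -
  obtain k where k: "k \<in> {1..2 * c}" and rare: "2 * card (hit_by (fanout_band b k)) \<le> n"
    using exists_rarely_hit_band[of b] c b_anti by blast
  have b_ge_1: "1 \<le> b i" if "i \<le> 2 * c" for i
  proof -
    have "b (2 * c) \<le> b i"
      using that b_anti by (intro lift_Suc_antimono_le_ivl[of "{..<2 * c}" b i "2 * c"]) auto
    then show ?thesis
      using b_last by simp
  qed
  define T where "T = {t\<in>{0..<m}. b (k - 1) \<le> real (fanout t)}"
  define G where "G = {0..<n} - hit_by (fanout_band b k)"
  define R where "R x y \<longleftrightarrow> x = y \<or> (N x - T) \<inter> (N y - T) \<noteq> {}" for x y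
  have "1 \<le> b (k - 1)" "1 \<le> b k"
    using k by (auto intro!: b_ge_1)
  have card_T: "real (card T) \<le> real c * real n / b (k - 1)"
    unfolding T_def using \<open>1 \<le> b (k - 1)\<close> by (intro card_high_fanout_le) linarith
  have "card G = n - card (hit_by (fanout_band b k))"
    unfolding G_def by (subst card_Diff_subset) (auto simp: hit_by_def)
  then have card_G: "real n \<le> 2 * real (card G)"
    using rare by linarith
  have light: "real (fanout t) \<le> b k" if "j \<in> G" "t \<in> N j - T" for j t
    using that deps_subset[of j] by (force simp: G_def hit_by_def T_def fanout_band_def)
  have few_conflicts: "real (card {y\<in>G. R x y}) \<le> real c * b k" if "x \<in> G" for x
  proof -
    have "card {y\<in>G. R x y} \<le> card {y\<in>{0..<n}. R x y}"
      by (intro card_mono) (auto simp: G_def)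
    also have "real \<dots> \<le> real c * b k"
      unfolding R_def using that \<open>1 \<le> b k\<close>
      by (intro card_conflicts_le c light) (auto simp: G_def)
    finally show ?thesis by simp
  qed
  have "\<exists>S\<subseteq>G. (\<forall>x\<in>S. \<forall>y\<in>S. x \<noteq> y \<longrightarrow> \<not> R x y)
      \<and> real (card G) \<le> real c * b k * real (card S)"
  proof (rule exists_independent_subset)
    show "finite G"
      by (simp add: G_def)
    show "R y x" if "R x y" for x y
      using that by (auto simp: R_def Int_commute)
    show "R x x" for x
      by (simp add: R_def)
  qed (rule few_conflicts)
  then obtain S where S: "S \<subseteq> G" "\<forall>x\<in>S. \<forall>y\<in>S. x \<noteq> y \<longrightarrow> \<not> R x y"
    "real (card G) \<le> real c * b k * real (card S)"
    by blast
  have "real n \<le> real (card S) * (2 * real c * b k)"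
    using card_G S(3) by (simp add: algebra_simps)
  then have "real n / (2 * real c * b k) \<le> real (card S)"
    using c \<open>1 \<le> b k\<close> by (simp add: pos_divide_le_eq)
  moreover have "disjoint_family_on (\<lambda>j. N j - T) S"
    using S(2) by (auto simp: disjoint_family_on_def R_def)
  ultimately show ?thesis
    using k S(1) card_T by (intro exI[of _ k] exI[of _ S] exI[of _ T]) (auto simp: G_def T_def)
qed

end

theorem mainTheorem12:
  fixes f :: "(nat \<Rightarrow> bool) \<Rightarrow> nat \<Rightarrow> bool"
    and m n c :: nat
    and p :: "nat \<Rightarrow> real"
    and b :: "nat \<Rightarrow> real"
  assumes c_def: "c = locality f m n"
    and c_pos: "c \<ge> 1"
    and p_range: "\<And>i. i < m \<Longrightarrow> 0 \<le> p i \<and> p i \<le> 1"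
    and b0: "b 0 \<le> real n"
    and b_mono: "\<And>k. k < 2 * c \<Longrightarrow> b (Suc k) \<le> b k"
    and b_last: "b (2 * c) \<ge> 1"
  shows "\<exists>i S T. 0 < i \<and> i \<le> 2 * c \<and> S \<subseteq> {0..<n} \<and> T \<subseteq> {0..<m}
     \<and> real (card S) \<ge> real n / (2 * real c * b i)
     \<and> real (card T) \<le> real c * real n / b (i - 1)
     \<and> (\<forall>a :: nat \<Rightarrow> bool.
          set_pmf (input_dist m p) \<inter> {w. \<forall>j\<in>T. w j = a j} \<noteq> {} \<longrightarrow>
          prob_space.indep_vars
            (measure_pmf (cond_pmf (input_dist m p) {w. \<forall>j\<in>T. w j = a j}))
            (\<lambda>_. count_space (UNIV :: bool set)) (\<lambda>j w. f w j) S)"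
proof -
  interpret bounded_dependency m n c "\<lambda>j. {i. affects f m i j}"
  proof
    show "{i. affects f m i j} \<subseteq> {0..<m}" for j
      by (auto simp: affects_def)
    show "card {i. affects f m i j} \<le> c" if "j < n" for j
      unfolding c_def locality_def using that by (intro Max_ge) auto
  qed
  obtain k S T where k: "0 < k" "k \<le> 2 * c" and S: "S \<subseteq> {0..<n}"
      "real n / (2 * real c * b k) \<le> real (card S)"
    and T: "T \<subseteq> {0..<m}" "real (card T) \<le> real c * real n / b (k - 1)"
    and disj: "disjoint_family_on (\<lambda>j. {i. affects f m i j} - T) S"
    using exists_scale_with_disjoint_free_deps[of b] c_pos b_mono b_last by blast
  have "prob_space.indep_vars (measure_pmf (cond_pmf (input_dist m p) {w. \<forall>j\<in>T. w j = a j}))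
      (\<lambda>_. count_space UNIV) (\<lambda>j w. f w j) S"
    if "set_pmf (input_dist m p) \<inter> {w. \<forall>j\<in>T. w j = a j} \<noteq> {}" for a
    using T(1) deps_subset disj eq_if_agree_on_affecting_inputs[of _ m _ f] that
    unfolding input_dist_def by (rule indep_vars_cond_Pi_pmf_local) auto
  then show ?thesis
    using k S T by blast
qed

end
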